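(* Let $\mathcal{H}$ be an $n$-dimensional (real or complex) Hilbert space, let $(F,G)$ be an $(N,n)$ dual pair in $\mathcal{H}$, let $U$ be a unitary operator on $\mathcal{H}$, and let $\{q_i\}_{i=1}^N$ be the weight number sequence associated with a probability sequence $\{p_i\}_{i=1}^N$. Then $(F,G)\in\zeta_P^{(1)}$ if and only if $(UF,UG)\in\zeta_P^{(1)}$, where $UF=\{Uf_i\}_{i=1}^N$, $UG=\{Ug_i\}_{i=1}^N$.
   Context: A finite sequence $F=\{f_i\}_{i=1}^N$ in $\mathcal{H}$ is a frame if there are $A,B>0$ with $A\|f\|^2\le\sum_{i=1}^N|\langle f,f_i\rangle|^2\le B\|f\|^2$ for all $f$. A frame $G=\{g_i\}_{i=1}^N$ is a dual of $F$ if $f=\sum_i\langle f,f_i\rangle g_i=\sum_i\langle f,g_i\rangle f_i$ for all $f$; then $(F,G)$ is an $(N,n)$ dual pair. A probability sequence is $\{p_i\}_{i=1}^N$ with $0\le p_i\le1$, $\sum p_i=1$; weight numbers $q_i=\frac{\sum_{j} p_j}{\sum_{j} p_j-p_i}\cdot\frac{N-1}{n}$. For $\Lambda\subseteq\{1,\dots,N\}$ the error operator is $E_{\Lambda,(F,G)}f=\sum_{i\in\Lambda}q_i\langle f,f_i\rangle g_i$, and $\mathcal{A}_P^{(1)}(F,G)=\max_{|\Lambda|=1}\frac{\|E_{\Lambda,(F,G)}\|+\rho(E_{\Lambda,(F,G)})}{2}$ (operator norm and spectral radius). Let $\mathcal{A}_P^{(1)}=\inf\{\mathcal{A}_P^{(1)}(F,G):(F,G)\text{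 an }(N,n)\text{ dual pair in }\mathcal{H}\}$. A dual pair is a 1-erasure PASOD-pair if $\mathcal{A}_P^{(1)}(F,G)=\mathcal{A}_P^{(1)}$; $\zeta_P^{(1)}$ is the set of such pairs. *)

theory Defs
  imports "Jordan_Normal_Form.Spectral_Radius" "Jordan_Normal_Form.Schur_Decomposition"
begin

text \<open>The n-dimensional Hilbert space H is modelled as K^n (vectors of dimension n, as
  complex vectors whose entries lie in the scalar field K), where K is either the reals
  (embedded in the complex numbers) or all complex numbers. Frames are indexed by 0..<N.\<close>

definition scalar_field :: "complex set \<Rightarrow> bool" where
  "scalar_field K \<longleftrightarrow> K = \<real> \<or> K = UNIV"

definition hspace :: "complex set \<Rightarrow> nat \<Rightarrow> complex vec set" where
  "hspace K n = {v \<in> carrier_vec n. \<forall>j<n. v $ j \<in> K}"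

definition hinner :: "complex vec \<Rightarrow> complex vec \<Rightarrow> complex" where
  "hinner f g = f \<bullet>c g"

definition hnorm :: "complex vec \<Rightarrow> real" where
  "hnorm v = sqrt (\<Sum>j<dim_vec v. (cmod (v $ j))\<^sup>2)"

definition is_frame :: "complex set \<Rightarrow> nat \<Rightarrow> nat \<Rightarrow> (nat \<Rightarrow> complex vec) \<Rightarrow> bool" where
  "is_frame K n N F \<longleftrightarrow> (\<forall>i<N. F i \<in> hspace K n) \<and>
     (\<exists>A B. A > 0 \<and> B > 0 \<and> (\<forall>f\<in>hspace K n.
        A * (hnorm f)\<^sup>2 \<le> (\<Sum>i<N. (cmod (hinner f (F i)))\<^sup>2) \<and>
        (\<Sum>i<N. (cmod (hinner f (F i)))\<^sup>2) \<le> B * (hnorm f)\<^sup>2))"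

definition dual_pair :: "complex set \<Rightarrow> nat \<Rightarrow> nat \<Rightarrow> (nat \<Rightarrow> complex vec) \<Rightarrow> (nat \<Rightarrow> complex vec) \<Rightarrow> bool" where
  "dual_pair K n N F G \<longleftrightarrow> is_frame K n N F \<and> is_frame K n N G \<and>
     (\<forall>f\<in>hspace K n.
        f = finsum_vec TYPE(complex) n (\<lambda>i. hinner f (F i) \<cdot>\<^sub>v G i) {..<N} \<and>
        f = finsum_vec TYPE(complex) n (\<lambda>i. hinner f (G i) \<cdot>\<^sub>v F i) {..<N})"

definition prob_seq :: "nat \<Rightarrow> (nat \<Rightarrow> real) \<Rightarrow> bool" where
  "prob_seq N p \<longleftrightarrow> (\<forall>i<N. 0 \<le> p i \<and> p i \<le> 1) \<and> (\<Sum>i<N. p i) = 1"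

definition weight :: "nat \<Rightarrow> nat \<Rightarrow> (nat \<Rightarrow> real) \<Rightarrow> nat \<Rightarrow> real" where
  "weight N n p i = (\<Sum>j<N. p j) / ((\<Sum>j<N. p j) - p i) * ((real N - 1) / real n)"

text \<open>Error operator for \<Lambda> = {i}: f \<mapsto> q_i <f,f_i> g_i, as an n x n matrix.\<close>
definition err_op :: "nat \<Rightarrow> (nat \<Rightarrow> real) \<Rightarrow> (nat \<Rightarrow> complex vec) \<Rightarrow> (nat \<Rightarrow> complex vec) \<Rightarrow> nat \<Rightarrow> complex mat" where
  "err_op n q F G i = mat n n (\<lambda>(j,k). complex_of_real (q i) * (G i $ j) * cnj (F i $ k))"

definition op_norm :: "complex set \<Rightarrow> nat \<Rightarrow> complex mat \<Rightarrow> real" where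
  "op_norm K n E = Sup {hnorm (E *\<^sub>v v) | v. v \<in> hspace K n \<and> hnorm v \<le> 1}"

definition A1 :: "complex set \<Rightarrow> nat \<Rightarrow> nat \<Rightarrow> (nat \<Rightarrow> real) \<Rightarrow> (nat \<Rightarrow> complex vec) \<Rightarrow> (nat \<Rightarrow> complex vec) \<Rightarrow> real" where
  "A1 K n N q F G = Max ((\<lambda>i. (op_norm K n (err_op n q F G i) + spectral_radius (err_op n q F G i)) / 2) ` {..<N})"

definition A1_opt :: "complex set \<Rightarrow> nat \<Rightarrow> nat \<Rightarrow> (nat \<Rightarrow> real) \<Rightarrow> real" where
  "A1_opt K n N q = Inf {A1 K n N q F G | F G. dual_pair K n N F G}"

definition PASOD1 :: "complex set \<Rightarrow> nat \<Rightarrow> nat \<Rightarrow> (nat \<Rightarrow> real) \<Rightarrow> ((nat \<Rightarrow> complex vec) \<times> (nat \<Rightarrow> complex vec)) set" where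
  "PASOD1 K n N q = {(F, G). dual_pair K n N F G \<and> A1 K n N q F G = A1_opt K n N q}"

definition unitary_op :: "complex set \<Rightarrow> nat \<Rightarrow> complex mat \<Rightarrow> bool" where
  "unitary_op K n U \<longleftrightarrow> U \<in> carrier_mat n n \<and> (\<forall>j<n. \<forall>k<n. U $$ (j,k) \<in> K) \<and>
     mat_adjoint U * U = 1\<^sub>m n"

end

theory Submission
  imports Defs
begin

text \<open>A unitary U whose entries lie in K maps K^n onto itself and preserves inner products
  and norms. Hence (UF, UG) is again a dual pair, and its error operators are
  U E U* for the error operators E of (F, G): being similar to E, they have the same
  spectral radius, and since U and U* are isometric bijections of the unit ball of K^n,
  the same operator norm. So A1 takes the same value on both pairs, while the optimal value
  A1_opt they are compared with does not depend on the pair.\<close>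

lemma index_mult_mat_vec_sum:
  assumes "A \<in> carrier_mat nr n" "v \<in> carrier_vec n" "j < nr"
  shows "(A *\<^sub>v v) $ j = (\<Sum>k<n. A $$ (j,k) * v $ k)"
  using assms by (simp add: scalar_prod_def atLeast0LessThan)

lemma index_mult_mat_sum:
  assumes "A \<in> carrier_mat nr m" "B \<in> carrier_mat m nc" "j < nr" "k < nc"
  shows "(A * B) $$ (j,k) = (\<Sum>b<m. A $$ (j,b) * B $$ (b,k))"
  using assms by (simp add: scalar_prod_def atLeast0LessThan)

lemma mat_adjoint_carrier:
  assumes "A \<in> carrier_mat nr nc"
  shows "mat_adjoint A \<in> carrier_mat nc nr"
  using assms unfolding mat_adjoint_def by (auto intro: mat_of_rows_carrier)

lemma index_mat_adjoint:
  assumes "A \<in> carrier_mat nr nc" "j < nc" "k < nr"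
  shows "mat_adjoint A $$ (j,k) = cnj (A $$ (k,j))"
  using assms by (simp add: mat_adjoint_def mat_of_rows_def)

lemma mat_adjoint_adjoint:
  assumes "A \<in> carrier_mat nr nc"
  shows "mat_adjoint (mat_adjoint (A :: complex mat)) = A"
  using assms mat_adjoint_carrier[OF assms] mat_adjoint_carrier[OF mat_adjoint_carrier[OF assms]]
  by (intro eq_matI) (auto simp: index_mat_adjoint)

lemma mult_mat_vec_finsum:
  assumes A: "A \<in> carrier_mat nr n" and "finite I" and f: "f \<in> I \<rightarrow> carrier_vec n"
  shows "A *\<^sub>v finsum_vec TYPE('a::comm_ring) n f I = finsum_vec TYPE('a) nr (\<lambda>i. A *\<^sub>v f i) I"
  using assms(2,3)
proof (induction I rule: finite_induct)
  case empty
  show ?case using A by (auto simp: finsum_vec_empty)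
next
  case (insert i I)
  have "A *\<^sub>v finsum_vec TYPE('a) n f (insert i I)
      = A *\<^sub>v f i + A *\<^sub>v finsum_vec TYPE('a) n f I"
    using insert A by (simp add: finsum_vec_insert finsum_vec_closed mult_add_distrib_mat_vec)
  also have "\<dots> = finsum_vec TYPE('a) nr (\<lambda>i. A *\<^sub>v f i) (insert i I)"
    using insert A by (simp add: finsum_vec_insert Pi_iff)
  finally show ?case .
qed

lemma hinner_sum:
  assumes "w \<in> carrier_vec n"
  shows "hinner v w = (\<Sum>j<n. v $ j * cnj (w $ j))"
  using assms by (simp add: hinner_def scalar_prod_def atLeast0LessThan)

lemma hinner_mult_mat_vec_left:
  assumes A: "A \<in> carrier_mat nr nc" and v: "v \<in> carrier_vec nc" and w: "w \<in> carrier_vec nr"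
  shows "hinner (A *\<^sub>v v) w = hinner v (mat_adjoint A *\<^sub>v w)"
proof -
  have "hinner (A *\<^sub>v v) w = (\<Sum>j<nr. \<Sum>k<nc. A $$ (j,k) * v $ k * cnj (w $ j))"
    using assms by (simp add: hinner_sum[OF w] index_mult_mat_vec_sum sum_distrib_right
        del: index_mult_mat_vec)
  also have "\<dots> = (\<Sum>k<nc. \<Sum>j<nr. A $$ (j,k) * v $ k * cnj (w $ j))"
    by (rule sum.swap)
  also have "\<dots> = hinner v (mat_adjoint A *\<^sub>v w)"
    using assms mat_adjoint_carrier[OF A]
    by (simp add: hinner_sum[of _ nc] index_mult_mat_vec_sum index_mat_adjoint sum_distrib_left
        mult_ac del: index_mult_mat_vec)
  finally show ?thesis .
qed

lemma hinner_mult_mat_vec_right: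
  assumes A: "A \<in> carrier_mat nr nc" and v: "v \<in> carrier_vec nr" and w: "w \<in> carrier_vec nc"
  shows "hinner v (A *\<^sub>v w) = hinner (mat_adjoint A *\<^sub>v v) w"
  using hinner_mult_mat_vec_left[OF mat_adjoint_carrier[OF A] v w] mat_adjoint_adjoint[OF A]
  by simp

lemma finsum_hinner_mult_mat_vec:
  fixes N :: nat
  assumes U: "U \<in> carrier_mat n n" and f: "f \<in> carrier_vec n"
    and F: "\<forall>i<N. F i \<in> carrier_vec n" and G: "\<forall>i<N. G i \<in> carrier_vec n"
  shows "finsum_vec TYPE(complex) n (\<lambda>i. hinner f (U *\<^sub>v F i) \<cdot>\<^sub>v (U *\<^sub>v G i)) {..<N}
    = U *\<^sub>v finsum_vec TYPE(complex) n (\<lambda>i. hinner (mat_adjoint U *\<^sub>v f) (F i) \<cdot>\<^sub>v G i) {..<N}"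
proof -
  have "finsum_vec TYPE(complex) n (\<lambda>i. hinner f (U *\<^sub>v F i) \<cdot>\<^sub>v (U *\<^sub>v G i)) {..<N}
      = finsum_vec TYPE(complex) n (\<lambda>i. U *\<^sub>v (hinner (mat_adjoint U *\<^sub>v f) (F i) \<cdot>\<^sub>v G i)) {..<N}"
    unfolding finsum_vec_def using U f F G
    by (intro comm_monoid.finprod_cong'[OF comm_monoid_vec])
      (auto simp: monoid_vec_simps hinner_mult_mat_vec_right mult_mat_vec)
  also have "\<dots> = U *\<^sub>v finsum_vec TYPE(complex) n (\<lambda>i. hinner (mat_adjoint U *\<^sub>v f) (F i) \<cdot>\<^sub>v G i) {..<N}"
    using U G by (intro mult_mat_vec_finsum[symmetric]) auto
  finally show ?thesis .
qed

lemma hnorm_eq_sqrt_hinner: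
  assumes "v \<in> carrier_vec n"
  shows "hnorm v = sqrt (Re (hinner v v))"
proof -
  have "hinner v v = of_real (\<Sum>j<n. (cmod (v $ j))\<^sup>2)"
    unfolding hinner_sum[OF assms] of_real_sum by (intro sum.cong refl) (metis complex_norm_square)
  then show ?thesis using assms unfolding hnorm_def by simp
qed

lemma spectral_radius_similar:
  assumes "similar_mat A B"
  shows "spectral_radius A = spectral_radius (B :: complex mat)"
proof -
  obtain n where "A \<in> carrier_mat n n" "B \<in> carrier_mat n n"
    using similar_matD[OF assms] by auto
  then have "spectrum A = spectrum B"
    using char_poly_similar[OF assms] by (simp add: spectrum_root_char_poly)
  then show ?thesis unfolding spectral_radius_def by simp
qed

lemma err_op_mult_mat_vec:
  assumes U: "U \<in> carrier_mat n n" and F: "F i \<in> carrier_vec n" and G: "G i \<in> carrier_vec n"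
  shows "err_op n q (\<lambda>i. U *\<^sub>v F i) (\<lambda>i. U *\<^sub>v G i) i = U * err_op n q F G i * mat_adjoint U"
proof (rule eq_matI)
  let ?E = "err_op n q F G i" and ?c = "complex_of_real (q i)"
  have E: "?E \<in> carrier_mat n n" unfolding err_op_def by simp
  fix j k assume "j < dim_row (U * ?E * mat_adjoint U)" "k < dim_col (U * ?E * mat_adjoint U)"
  then have j: "j < n" and k: "k < n" using U mat_adjoint_carrier[OF U] by auto
  have "(U * ?E * mat_adjoint U) $$ (j,k)
      = (\<Sum>b<n. (\<Sum>a<n. U $$ (j,a) * ?E $$ (a,b)) * mat_adjoint U $$ (b,k))"
    unfolding index_mult_mat_sum[OF mult_carrier_mat[OF U E] mat_adjoint_carrier[OF U] j k]
    using U E j by (intro sum.cong refl) (simp add: index_mult_mat_sum[OF U E j] del: index_mult_mat)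
  also have "\<dots> = (\<Sum>b<n. \<Sum>a<n. ?c * (U $$ (j,a) * G i $ a) * cnj (U $$ (k,b) * F i $ b))"
    unfolding sum_distrib_right using U k
    by (intro sum.cong refl) (simp add: err_op_def index_mat_adjoint mult_ac)
  also have "\<dots> = ?c * (\<Sum>a<n. U $$ (j,a) * G i $ a) * cnj (\<Sum>b<n. U $$ (k,b) * F i $ b)"
    by (subst sum.swap) (simp add: sum_product sum_distrib_left mult_ac)
  also have "\<dots> = err_op n q (\<lambda>i. U *\<^sub>v F i) (\<lambda>i. U *\<^sub>v G i) i $$ (j,k)"
    using U F G j k by (simp add: err_op_def index_mult_mat_vec_sum del: index_mult_mat_vec)
  finally show "err_op n q (\<lambda>i. U *\<^sub>v F i) (\<lambda>i. U *\<^sub>v G i) i $$ (j,k) = (U * ?E * mat_adjoint U) $$ (j,k)"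
    by simp
qed (use U mat_adjoint_carrier[OF U] in \<open>auto simp: err_op_def\<close>)

lemma unitary_op_carrier: "unitary_op K n U \<Longrightarrow> U \<in> carrier_mat n n"
  unfolding unitary_op_def by simp

lemma unitary_op_mult_adjoint:
  assumes "unitary_op K n U"
  shows "U * mat_adjoint U = 1\<^sub>m n"
  using assms mat_adjoint_carrier mat_mult_left_right_inverse unfolding unitary_op_def by blast

lemma unitary_op_adjoint:
  assumes K: "scalar_field K" and U: "unitary_op K n U"
  shows "unitary_op K n (mat_adjoint U)"
proof -
  have Uc: "U \<in> carrier_mat n n" using U by (rule unitary_op_carrier)
  have "mat_adjoint U $$ (j,k) \<in> K" if "j < n" "k < n" for j k
    using K U that index_mat_adjoint[OF Uc]
    unfolding scalar_field_def unitary_op_def by (auto simp: Reals_cnj_iff)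
  then show ?thesis
    using mat_adjoint_carrier[OF Uc] unitary_op_mult_adjoint[OF U] mat_adjoint_adjoint[OF Uc]
    unfolding unitary_op_def by simp
qed

lemma unitary_op_cancel:
  assumes "unitary_op K n U" "v \<in> carrier_vec n"
  shows "mat_adjoint U *\<^sub>v (U *\<^sub>v v) = v" "U *\<^sub>v (mat_adjoint U *\<^sub>v v) = v"
  using assms unitary_op_carrier[OF assms(1)] mat_adjoint_carrier unitary_op_mult_adjoint[OF assms(1)]
  unfolding unitary_op_def by (metis assoc_mult_mat_vec one_mult_mat_vec)+

lemma hinner_unitary:
  assumes U: "unitary_op K n U" and "v \<in> carrier_vec n" "w \<in> carrier_vec n"
  shows "hinner (U *\<^sub>v v) (U *\<^sub>v w) = hinner v w"
  using assms hinner_mult_mat_vec_left[OF unitary_op_carrier[OF U]] unitary_op_carrier[OF U]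
  by (simp add: unitary_op_cancel)

lemma hnorm_unitary:
  assumes U: "unitary_op K n U" and v: "v \<in> carrier_vec n"
  shows "hnorm (U *\<^sub>v v) = hnorm v"
  using hinner_unitary[OF U v v] hnorm_eq_sqrt_hinner[OF v] v unitary_op_carrier[OF U]
  by (simp add: hnorm_eq_sqrt_hinner[of _ n])

lemma hspace_carrier: "v \<in> hspace K n \<Longrightarrow> v \<in> carrier_vec n"
  unfolding hspace_def by simp

lemma hspace_unitary:
  assumes K: "scalar_field K" and U: "unitary_op K n U" and v: "v \<in> hspace K n"
  shows "U *\<^sub>v v \<in> hspace K n"
proof -
  have Uc: "U \<in> carrier_mat n n" and vc: "v \<in> carrier_vec n"
    using U v by (auto simp: unitary_op_carrier hspace_carrier)
  have "(U *\<^sub>v v) $ j \<in> K" if j: "j < n" for j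
  proof (cases "K = \<real>")
    case True
    then show ?thesis using U v j unfolding index_mult_mat_vec_sum[OF Uc vc j] hspace_def unitary_op_def
      by (auto intro!: sum_in_Reals Reals_mult)
  qed (use K in \<open>simp add: scalar_field_def\<close>)
  then show ?thesis using Uc vc unfolding hspace_def by simp
qed

lemma unitary_image_unit_ball:
  assumes K: "scalar_field K" and U: "unitary_op K n U"
  shows "(\<lambda>v. U *\<^sub>v v) ` {v \<in> hspace K n. hnorm v \<le> 1} = {v \<in> hspace K n. hnorm v \<le> 1}"
proof (intro equalityI subsetI)
  fix w assume "w \<in> {v \<in> hspace K n. hnorm v \<le> 1}"
  then have w: "w \<in> hspace K n" "hnorm w \<le> 1" by auto
  have "mat_adjoint U *\<^sub>v w \<in> {v \<in> hspace K n. hnorm v \<le> 1}"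
    using w hspace_unitary[OF K unitary_op_adjoint[OF K U]]
      hnorm_unitary[OF unitary_op_adjoint[OF K U]] hspace_carrier by auto
  moreover have "w = U *\<^sub>v (mat_adjoint U *\<^sub>v w)"
    using unitary_op_cancel(2)[OF U hspace_carrier[OF w(1)]] by simp
  ultimately show "w \<in> (\<lambda>v. U *\<^sub>v v) ` {v \<in> hspace K n. hnorm v \<le> 1}" by blast
qed (use hspace_unitary[OF K U] hnorm_unitary[OF U] hspace_carrier in auto)

lemma op_norm_unitary_conj:
  assumes K: "scalar_field K" and U: "unitary_op K n U" and E: "E \<in> carrier_mat n n"
  shows "op_norm K n (U * E * mat_adjoint U) = op_norm K n E"
proof -
  let ?B = "{v \<in> hspace K n. hnorm v \<le> 1}"
  have op_norm_image: "op_norm K n M = Sup ((\<lambda>v. hnorm (M *\<^sub>v v)) ` ?B)" for M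
    unfolding op_norm_def by (rule arg_cong[where f = Sup]) blast
  have Uc: "U \<in> carrier_mat n n" and U': "unitary_op K n (mat_adjoint U)"
    using U K by (auto simp: unitary_op_carrier unitary_op_adjoint)
  have "hnorm ((U * E * mat_adjoint U) *\<^sub>v v) = hnorm (E *\<^sub>v (mat_adjoint U *\<^sub>v v))"
    if "v \<in> ?B" for v
    using that Uc E mat_adjoint_carrier[OF Uc] hspace_carrier[of v K n]
    by (simp add: hnorm_unitary[OF U] assoc_mult_mat_vec[of _ n n _ n])
  then have "op_norm K n (U * E * mat_adjoint U)
      = Sup ((\<lambda>w. hnorm (E *\<^sub>v w)) ` ((\<lambda>v. mat_adjoint U *\<^sub>v v) ` ?B))"
    unfolding op_norm_image image_image by (metis (no_types, lifting) image_cong)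
  then show ?thesis
    unfolding unitary_image_unit_ball[OF K U'] op_norm_image .
qed

lemma is_frame_unitary:
  assumes K: "scalar_field K" and U: "unitary_op K n U" and F: "is_frame K n N F"
  shows "is_frame K n N (\<lambda>i. U *\<^sub>v F i)"
proof -
  obtain A B where FK: "\<forall>i<N. F i \<in> hspace K n" and AB: "A > 0" "B > 0"
    and bounds: "\<forall>f\<in>hspace K n. A * (hnorm f)\<^sup>2 \<le> (\<Sum>i<N. (cmod (hinner f (F i)))\<^sup>2) \<and>
        (\<Sum>i<N. (cmod (hinner f (F i)))\<^sup>2) \<le> B * (hnorm f)\<^sup>2"
    using F unfolding is_frame_def by blast
  have U': "unitary_op K n (mat_adjoint U)" by (rule unitary_op_adjoint[OF K U])
  have "A * (hnorm f)\<^sup>2 \<le> (\<Sum>i<N. (cmod (hinner f (U *\<^sub>v F i)))\<^sup>2) \<and>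
        (\<Sum>i<N. (cmod (hinner f (U *\<^sub>v F i)))\<^sup>2) \<le> B * (hnorm f)\<^sup>2"
    if f: "f \<in> hspace K n" for f
  proof -
    have "hinner f (U *\<^sub>v F i) = hinner (mat_adjoint U *\<^sub>v f) (F i)" if "i < N" for i
      using that FK hspace_carrier[OF f] hspace_carrier[of "F i" K n]
      by (simp add: hinner_mult_mat_vec_right[OF unitary_op_carrier[OF U]])
    moreover have "hnorm f = hnorm (mat_adjoint U *\<^sub>v f)"
      using hnorm_unitary[OF U'] f hspace_carrier by metis
    ultimately show ?thesis
      using bounds hspace_unitary[OF K U' f] by simp
  qed
  then show ?thesis unfolding is_frame_def using AB FK hspace_unitary[OF K U] by blast
qed

lemma dual_pair_unitary:
  assumes K: "scalar_field K" and U: "unitary_op K n U" and FG: "dual_pair K n N F G"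
  shows "dual_pair K n N (\<lambda>i. U *\<^sub>v F i) (\<lambda>i. U *\<^sub>v G i)"
proof -
  have F: "\<forall>i<N. F i \<in> carrier_vec n" and G: "\<forall>i<N. G i \<in> carrier_vec n"
    using FG hspace_carrier unfolding dual_pair_def is_frame_def by auto
  have Uc: "U \<in> carrier_mat n n" by (rule unitary_op_carrier[OF U])
  have "f = finsum_vec TYPE(complex) n (\<lambda>i. hinner f (U *\<^sub>v F i) \<cdot>\<^sub>v (U *\<^sub>v G i)) {..<N} \<and>
        f = finsum_vec TYPE(complex) n (\<lambda>i. hinner f (U *\<^sub>v G i) \<cdot>\<^sub>v (U *\<^sub>v F i)) {..<N}"
    if f: "f \<in> hspace K n" for f
  proof -
    have "mat_adjoint U *\<^sub>v f \<in> hspace K n"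
      by (rule hspace_unitary[OF K unitary_op_adjoint[OF K U] f])
    then have "mat_adjoint U *\<^sub>v f
          = finsum_vec TYPE(complex) n (\<lambda>i. hinner (mat_adjoint U *\<^sub>v f) (F i) \<cdot>\<^sub>v G i) {..<N} \<and>
        mat_adjoint U *\<^sub>v f
          = finsum_vec TYPE(complex) n (\<lambda>i. hinner (mat_adjoint U *\<^sub>v f) (G i) \<cdot>\<^sub>v F i) {..<N}"
      using FG unfolding dual_pair_def by blast
    then show ?thesis
      using hspace_carrier[OF f] unitary_op_cancel(2)[OF U]
      by (simp add: finsum_hinner_mult_mat_vec[OF Uc _ F G] finsum_hinner_mult_mat_vec[OF Uc _ G F])
  qed
  then show ?thesis
    using FG is_frame_unitary[OF K U] unfolding dual_pair_def by blast
qed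

lemma A1_unitary:
  assumes K: "scalar_field K" and U: "unitary_op K n U"
    and F: "\<forall>i<N. F i \<in> carrier_vec n" and G: "\<forall>i<N. G i \<in> carrier_vec n"
  shows "A1 K n N q (\<lambda>i. U *\<^sub>v F i) (\<lambda>i. U *\<^sub>v G i) = A1 K n N q F G"
proof -
  have Uc: "U \<in> carrier_mat n n" by (rule unitary_op_carrier[OF U])
  have E: "err_op n q F G i \<in> carrier_mat n n" for i unfolding err_op_def by simp
  have "similar_mat (U * err_op n q F G i * mat_adjoint U) (err_op n q F G i)" for i
    using Uc E mat_adjoint_carrier[OF Uc] unitary_op_mult_adjoint[OF U] U
    by (intro similar_matI[of _ _ _ _ n]) (auto simp: unitary_op_def)
  then show ?thesis unfolding A1_def
    using F G Uc by (intro arg_cong[where f = Max] image_cong refl)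
      (simp add: err_op_mult_mat_vec spectral_radius_similar op_norm_unitary_conj[OF K U E])
qed

theorem proposition4p2:
  fixes K :: "complex set" and n N :: nat and F G :: "nat \<Rightarrow> complex vec"
    and U :: "complex mat" and p :: "nat \<Rightarrow> real"
  assumes "scalar_field K"
    and "dual_pair K n N F G"
    and "unitary_op K n U"
    and "prob_seq N p"
  shows "(F, G) \<in> PASOD1 K n N (weight N n p)
     \<longleftrightarrow> ((\<lambda>i. U *\<^sub>v F i), (\<lambda>i. U *\<^sub>v G i)) \<in> PASOD1 K n N (weight N n p)"
proof -
  have "\<forall>i<N. F i \<in> carrier_vec n" "\<forall>i<N. G i \<in> carrier_vec n"
    using assms(2) hspace_carrier unfolding dual_pair_def is_frame_def by auto
  then have "A1 K n N (weight N n p) (\<lambda>i. U *\<^sub>v F i) (\<lambda>i. U *\<^sub>v G i) = A1 K n N (weight N n p) F G"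
    using A1_unitary[OF assms(1,3)] by blast
  moreover have "dual_pair K n N (\<lambda>i. U *\<^sub>v F i) (\<lambda>i. U *\<^sub>v G i)"
    using dual_pair_unitary[OF assms(1,3,2)] .
  ultimately show ?thesis using assms(2) unfolding PASOD1_def by simp
qed

end
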